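(* Let $T[n]$ be a standard Young tableau with exactly two rows, and let $T$ denote its second row, with entries $t_1<t_2<\dots<t_m$. Then during one promotion step applied to $T[n]$, the $k$-th entry $t_k$ of $T$ slides from the second row into the top row if and only if $t_k=2k$ and there is no $i<k$ with $t_i=2i$.
   Context: For a tableau $T$ with distinct positive entries, $T[n]$ is obtained by placing above $T$ a top row consisting of all elements of $\{1,\dots,n\}$ not in $T$, in increasing order. Promotion of a tableau with distinct entries $i_1<\dots<i_m$: (1) remove the top-left entry, leaving an empty box; (2) while the empty box has a box to its right or below, slide into it the smaller of the entries of those boxes (jeu-de-taquin slides); (3) then replace each remaining entry $i_k$ by $i_{k-1}$; (4) place $i_m$ in the empty box. "Slides into the top row" refers to a slide in step (2) moving an entry from the second row up into the first row. *)

theory Defs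
  imports Main
begin

text \<open>A tableau with two rows is represented by its two rows as lists
  (row 1 on top, row 2 below), left-justified.\<close>

definition top_row :: "nat \<Rightarrow> nat list \<Rightarrow> nat list" where
  "top_row n T = sorted_list_of_set ({1..n} - set T)"

definition two_row_SYT :: "nat \<Rightarrow> nat list \<Rightarrow> bool" where
  "two_row_SYT n T \<longleftrightarrow>
     sorted_wrt (<) T \<and> set T \<subseteq> {1..n} \<and> T \<noteq> [] \<and>
     length T \<le> length (top_row n T) \<and>
     (\<forall>j < length T. top_row n T ! j < T ! j)"

text \<open>Jeu-de-taquin phase of promotion while the empty box is in the top row.
  Arguments: the top-row entries strictly to the right of the empty box, and
  the second-row entries from the column of the empty box onwards.
  If the entry below is smaller than the entry to the right (or there is no
  entry to the right), the entry below slides up into the top row: the result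
  is Some j, meaning the j-th (0-based) entry of the given second-row list
  slides up.  Otherwise the right entry slides left and the empty box moves
  one column right.  None means no entry slides from the second row into
  the top row.\<close>
fun jdt_top :: "nat list \<Rightarrow> nat list \<Rightarrow> nat option" where
  "jdt_top as [] = None"
| "jdt_top [] (b # bs) = Some 0"
| "jdt_top (a # as) (b # bs) =
     (if b < a then Some 0 else map_option Suc (jdt_top as bs))"

text \<open>During promotion of T[n], the top-left entry is removed from the top row,
  so the empty box starts in column 1 with the rest of the top row to its right
  and the whole second row T starting below it. The k-th (1-based) entry of T
  slides into the top row.\<close>
definition slides_up :: "nat \<Rightarrow> nat list \<Rightarrow> nat \<Rightarrow> bool" where
  "slides_up n T k \<longleftrightarrow> jdt_top (tl (top_row n T)) T = Some (k - 1)"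

end

theory Submission
  imports Defs
begin

text \<open>The empty box travels along the top row and stops above the first entry \<open>t\<^sub>k\<close> of
  the second row that is smaller than its right-hand neighbour in the top row (or has no
  such neighbour). Since the top-left entry was removed, that neighbour is the \<open>(k+1)\<close>-st
  top-row entry \<open>a\<^sub>k\<^sub>+\<^sub>1\<close>. The numbers \<open>1, \<dots>, t\<^sub>k\<close> are \<open>t\<^sub>1, \<dots>, t\<^sub>k\<close> together with the
  top-row entries below \<open>t\<^sub>k\<close>; these include \<open>a\<^sub>1, \<dots>, a\<^sub>k\<close> because \<open>a\<^sub>k < t\<^sub>k\<close>
  (columns increase). So \<open>t\<^sub>k \<ge> 2k\<close>, with equality exactly when \<open>a\<^sub>k\<^sub>+\<^sub>1\<close> is absent or
  exceeds \<open>t\<^sub>k\<close>, i.e. exactly when the box, on reaching column \<open>k\<close>, stops there.\<close>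

lemma jdt_top_eq_Some_iff:
  "jdt_top as bs = Some i \<longleftrightarrow>
     i < length bs \<and> (length as \<le> i \<or> bs ! i < as ! i) \<and>
     (\<forall>l<i. \<not> (length as \<le> l \<or> bs ! l < as ! l))"
proof (induction as bs arbitrary: i rule: jdt_top.induct)
  case (2 b bs)
  then show ?case by (cases i) auto
next
  case (3 a as b bs)
  then show ?case by (cases i) (auto simp: less_Suc_eq_0_disj)
qed simp

lemma strict_sorted_nth_le_nth_iff:
  fixes xs :: "'a::linorder list"
  assumes "sorted_wrt (<) xs" and "i < length xs" and "j < length xs"
  shows "xs ! i \<le> xs ! j \<longleftrightarrow> i \<le> j"
  using assms by (metis leD le_less linorder_neqE_nat sorted_wrt_nth_less)

lemma card_le_nth_strict_sorted:
  fixes xs :: "'a::linorder list"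
  assumes "sorted_wrt (<) xs" and "i < length xs"
  shows "card {x \<in> set xs. x \<le> xs ! i} = Suc i"
proof -
  have "{x \<in> set xs. x \<le> xs ! i} = set (take (Suc i) xs)"
  proof (intro set_eqI iffI)
    fix x assume "x \<in> {x \<in> set xs. x \<le> xs ! i}"
    then obtain l where "l < length xs" "x = xs ! l" "xs ! l \<le> xs ! i"
      by (auto simp: in_set_conv_nth)
    then show "x \<in> set (take (Suc i) xs)"
      using assms strict_sorted_nth_le_nth_iff[OF assms(1)]
      by (auto simp: in_set_conv_nth intro!: exI[of _ l])
  next
    fix x assume "x \<in> set (take (Suc i) xs)"
    then obtain l where "l \<le> i" "x = xs ! l"
      by (auto simp: in_set_conv_nth less_Suc_eq_le)
    then show "x \<in> {x \<in> set xs. x \<le> xs ! i}"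
      using assms strict_sorted_nth_le_nth_iff[OF assms(1)] by auto
  qed
  moreover have "distinct xs" using assms(1) by (simp add: strict_sorted_iff)
  ultimately show ?thesis using assms(2) by (simp add: distinct_card)
qed

lemma card_le_strict_sorted_eq_Suc_iff:
  fixes xs :: "'a::linorder list"
  assumes sorted: "sorted_wrt (<) xs" and i: "i < length xs" and "xs ! i \<le> t"
  shows "card {x \<in> set xs. x \<le> t} = Suc i \<longleftrightarrow> length xs \<le> Suc i \<or> t < xs ! Suc i"
proof (cases "length xs \<le> Suc i \<or> t < xs ! Suc i")
  case True
  have "x \<le> xs ! i" if "x \<in> set xs" and "x \<le> t" for x
  proof -
    obtain l where l: "l < length xs" "x = xs ! l" using \<open>x \<in> set xs\<close> by (auto simp: in_set_conv_nth)
    have "\<not> Suc i \<le> l"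
      using True l \<open>x \<le> t\<close> strict_sorted_nth_le_nth_iff[OF sorted, of "Suc i" l] by auto
    then show ?thesis using l i strict_sorted_nth_le_nth_iff[OF sorted] by auto
  qed
  then have "{x \<in> set xs. x \<le> t} = {x \<in> set xs. x \<le> xs ! i}" using \<open>xs ! i \<le> t\<close> by auto
  then show ?thesis using True card_le_nth_strict_sorted[OF sorted i] by simp
next
  case False
  then have "{x \<in> set xs. x \<le> xs ! Suc i} \<subseteq> {x \<in> set xs. x \<le> t}" by auto
  then have "card {x \<in> set xs. x \<le> xs ! Suc i} \<le> card {x \<in> set xs. x \<le> t}"
    by (intro card_mono) simp_all
  then show ?thesis using False card_le_nth_strict_sorted[OF sorted, of "Suc i"] by simp
qed

lemma nth_eq_Suc_add_card_top_row:
  fixes T :: "nat list"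
  assumes sorted: "sorted_wrt (<) T" and "set T \<subseteq> {1..n}" and j: "j < length T"
  shows "T ! j = Suc j + card {a \<in> set (top_row n T). a \<le> T ! j}"
proof -
  define t where "t = T ! j"
  have "t \<in> set T" using j by (simp add: t_def)
  then have "{1..t} = {x \<in> set T. x \<le> t} \<union> {a \<in> set (top_row n T). a \<le> t}"
    using assms(2) by (auto simp: top_row_def)
  moreover have "{x \<in> set T. x \<le> t} \<inter> {a \<in> set (top_row n T). a \<le> t} = {}"
    by (auto simp: top_row_def)
  ultimately have "card {1..t} = card {x \<in> set T. x \<le> t} + card {a \<in> set (top_row n T). a \<le> t}"
    by (simp add: card_Un_disjoint)
  then show ?thesis using card_le_nth_strict_sorted[OF sorted j] by (simp add: t_def)
qed

lemma two_row_SYT_slide_condition_iff: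
  assumes syt: "two_row_SYT n T" and j: "j < length T"
  shows "length (tl (top_row n T)) \<le> j \<or> T ! j < tl (top_row n T) ! j \<longleftrightarrow> T ! j = 2 * Suc j"
proof -
  define A where "A = top_row n T"
  define c where "c = card {a \<in> set A. a \<le> T ! j}"
  have "sorted_wrt (<) A" by (simp add: A_def top_row_def)
  moreover have "j < length A" and "A ! j \<le> T ! j"
    using syt j by (auto simp: two_row_SYT_def A_def)
  ultimately have "length A \<le> Suc j \<or> T ! j < A ! Suc j \<longleftrightarrow> c = Suc j"
    unfolding c_def by (simp add: card_le_strict_sorted_eq_Suc_iff)
  also have "\<dots> \<longleftrightarrow> T ! j = 2 * Suc j"
  proof -
    have "T ! j = Suc j + c"
      using syt j nth_eq_Suc_add_card_top_row by (auto simp: two_row_SYT_def A_def c_def)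
    then show ?thesis by arith
  qed
  finally show ?thesis unfolding A_def[symmetric] by (cases A) auto
qed

theorem lemma4p3:
  fixes n k :: nat and T :: "nat list"
  assumes "two_row_SYT n T"
    and "1 \<le> k" and "k \<le> length T"
  shows "slides_up n T k \<longleftrightarrow>
           (T ! (k - 1) = 2 * k \<and> \<not> (\<exists>i. 1 \<le> i \<and> i < k \<and> T ! (i - 1) = 2 * i))"
proof -
  have "slides_up n T k \<longleftrightarrow> T ! (k - 1) = 2 * k \<and> \<not> (\<exists>l<k - 1. T ! l = 2 * Suc l)"
    using assms two_row_SYT_slide_condition_iff[OF assms(1), of "k - 1"]
      two_row_SYT_slide_condition_iff[OF assms(1)]
    by (auto simp: slides_up_def jdt_top_eq_Some_iff)
  moreover have "(\<exists>l<k - 1. T ! l = 2 * Suc l) \<longleftrightarrow> (\<exists>i. 1 \<le> i \<and> i < k \<and> T ! (i - 1) = 2 * i)"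
  proof
    assume "\<exists>l<k - 1. T ! l = 2 * Suc l"
    then obtain l where "l < k - 1" "T ! l = 2 * Suc l" by blast
    then show "\<exists>i. 1 \<le> i \<and> i < k \<and> T ! (i - 1) = 2 * i" by (intro exI[of _ "Suc l"]) auto
  next
    assume "\<exists>i. 1 \<le> i \<and> i < k \<and> T ! (i - 1) = 2 * i"
    then obtain i where "1 \<le> i" "i < k" "T ! (i - 1) = 2 * i" by blast
    then show "\<exists>l<k - 1. T ! l = 2 * Suc l" by (intro exI[of _ "i - 1"]) auto
  qed
  ultimately show ?thesis by blast
qed

end
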